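(* Assume (A2), (A3), that $\phi'>0$ on $\mathbb R_{++}$ (so $\phi^{-1}$ is continuously differentiable with positive derivative), and that $V$ is irreducible. Let $q\in\partial\mathcal F$ and $u(q)=\big((\phi^{-1})'(q_1)/\phi^{-1}(q_1),\dots,(\phi^{-1})'(q_K)/\phi^{-1}(q_K)\big)>0$. Let $n_0\in\mathcal N$ be any index with $\lambda_{n_0}(q)=\max_{n\in\mathcal N}\lambda_n(q)$, where $\lambda_n(q)=\rho(G(q)B^{(n)})$, and let $y,x\in\mathbb R_{++}^K$ be left and right eigenvectors of $G(q)B^{(n_0)}$ associated with $\lambda_{n_0}(q)$. If $w=c\,u(q)\circ y\circ x$ for some $c>0$, then every maximizer $p^*$ of $p\mapsto F(p,w)$ over $\mathcal P_+$ satisfies $\phi(\mathrm{SIR}_k(p^* )/\gamma_k)=q_k$ for all $k\in\mathcal K$.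
   Context: Network model: $K\ge 2$ links, $\mathcal K=\{1,\dots,K\}$. Power constraint set $\mathcal P=\{p\in\mathbb R_+^K: Cp\le\hat p\}$, where $C\in\{0,1\}^{N\times K}$ has at least one entry equal to $1$ in each column and $\hat p=(P_1,\dots,P_N)\in\mathbb R_{++}^N$; $\mathcal P_+=\mathcal P\cap\mathbb R_{++}^K$; $\mathcal N=\{1,\dots,N\}$; $c_n$ is the $n$-th row of $C$ as a column vector. Gain matrix $V\in\mathbb R_+^{K\times K}$ with zero diagonal, noise vector $z\in\mathbb R_{++}^K$, $\mathrm{SIR}_k(p)=p_k/((Vp)_k+z_k)$. SIR targets $\gamma_k>0$, $\Gamma=\mathrm{diag}(\gamma_1,\dots,\gamma_K)$. $B^{(n)}=\Gamma V+\frac1{P_n}\Gamma z c_n^T$. Assumption (A2): $\phi:\mathbb R_{++}\to\mathbb R$ is continuously differentiable and strictly increasing; $\mathcal Q=\phi(\mathbb R_{++})$. Assumption (A3): $\phi^{-1}:\mathcal Q\to\mathbb R_{++}$ is log-convex. $G(q)=\mathrm{diag}(\phi^{-1}(q_1),\dots,\phi^{-1}(q_K))$. Feasible QoS region $\mathcal F=\{q\in\mathcal Q^K:\exists p\in\mathcal P_+,\ q_k=\phi(\mathrm{SIR}_k(p)/\gamma_k)\ \forall k\}$; for $q\in\mathcal F$ the corresponding power vector is unique. $\partial\mathcal F$ is the set of $q\in\mathcal F$ whose corresponding power vector satisfies $Cp\le\hat p$ with equality in at least one component. Aggregate utility: $F(p,w)=\sum_{k\in\mathcal K}w_k\phi(\mathrm{SIR}_k(p)/\gamma_k)$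 for $w\in\mathbb R_{++}^K$; under (A2),(A3) its maximum over $\mathcal P_+$ is attained. $\circ$ denotes the entrywise product; $\rho(\cdot)$ the spectral radius. *)

theory Defs
  imports "HOL-Analysis.Analysis"
begin

text \<open>Links are indexed by a finite type 'k (K = CARD('k)), power constraints by a
finite type 'n (N = CARD('n)). Vectors are real^'k, matrices real^'k^'k, C :: real^'k^'n.\<close>

definition SIR :: "real^'k^'k \<Rightarrow> real^'k \<Rightarrow> 'k \<Rightarrow> real^'k \<Rightarrow> real" where
  "SIR V z k p = p$k / ((V *v p)$k + z$k)"

definition Pplus :: "real^'k^'n \<Rightarrow> real^'n \<Rightarrow> (real^'k) set" where
  "Pplus C phat = {p. (\<forall>k. p$k > 0) \<and> (\<forall>n. (C *v p)$n \<le> phat$n)}"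

definition phiinv :: "(real \<Rightarrow> real) \<Rightarrow> real \<Rightarrow> real" where
  "phiinv \<phi> = the_inv_into {0<..} \<phi>"

definition boundaryF ::
  "(real \<Rightarrow> real) \<Rightarrow> real^'k^'n \<Rightarrow> real^'n \<Rightarrow> real^'k^'k \<Rightarrow> real^'k \<Rightarrow> real^'k \<Rightarrow> (real^'k) set" where
  "boundaryF \<phi> C phat V z \<gamma> = {q. \<exists>p \<in> Pplus C phat.
      (\<forall>k. q$k = \<phi> (SIR V z k p / \<gamma>$k)) \<and> (\<exists>n. (C *v p)$n = phat$n)}"

definition aggF :: "(real \<Rightarrow> real) \<Rightarrow> real^'k^'k \<Rightarrow> real^'k \<Rightarrow> real^'k \<Rightarrow> real^'k \<Rightarrow> real^'k \<Rightarrow> real" where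
  "aggF \<phi> V z \<gamma> p w = (\<Sum>k\<in>UNIV. w$k * \<phi> (SIR V z k p / \<gamma>$k))"

text \<open>B^(n) = Gamma V + (1/P_n) Gamma z c_n^T.\<close>
definition Bmat :: "real^'k^'n \<Rightarrow> real^'n \<Rightarrow> real^'k^'k \<Rightarrow> real^'k \<Rightarrow> real^'k \<Rightarrow> 'n \<Rightarrow> real^'k^'k" where
  "Bmat C phat V z \<gamma> n = (\<chi> i j. \<gamma>$i * V$i$j + (1 / phat$n) * \<gamma>$i * z$i * C$n$j)"

definition Gmat :: "(real \<Rightarrow> real) \<Rightarrow> real^'k \<Rightarrow> real^'k^'k" where
  "Gmat \<phi> q = (\<chi> i j. if i = j then phiinv \<phi> (q$i) else 0)"

definition cmat :: "real^'k^'k \<Rightarrow> complex^'k^'k" where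
  "cmat A = (\<chi> i j. complex_of_real (A$i$j))"

definition spectral_radius :: "real^'k^'k \<Rightarrow> real" where
  "spectral_radius A = Max {cmod l | l. \<exists>v. v \<noteq> 0 \<and> cmat A *v v = l *s v}"

definition irreducible_mat :: "real^'k^'k \<Rightarrow> bool" where
  "irreducible_mat A \<longleftrightarrow> (\<forall>i j. (i, j) \<in> {(a, b). A$a$b > 0}\<^sup>+)"

end

theory Submission
  imports Defs
begin

text \<open>
  Let p be the power vector of the boundary point q, active at constraint n1,
  and let A = G(q) B(n0), whose spectral radius lam is at least 1 because p is a fixed point
  of G(q) B(n1) and n0 maximizes the spectral radius.  For a maximizer pstar we compare the
  Perron-weighted (a = y o x) gains in log-SIR:
  (1) log-convexity of phiinv gives a tangent inequality; with w = c u(q) o a optimality of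
      pstar forces sum_k a_k (ln SIR_k(pstar) - ln SIR_k(p)) >= 0;
  (2) a Friedland-Karlin type inequality for the nonnegative matrix A bounds the same sum
      by -ln lam * sum a <= 0, with equality only if lam = 1, constraint n0 is active at
      pstar and pstar is a fixed point of A, which (by irreducibility of V) means
      SIR(pstar) = SIR(p).
\<close>

text \<open>Eigenvectors belonging to pairwise distinct eigenvalues are linearly independent
  (induction on the set of eigenvalues: apply the matrix and subtract a multiple).\<close>
lemma eigenvectors_independent:
  fixes M :: "'a::field^'k^'k" and v :: "'a \<Rightarrow> 'a^'k"
  assumes "finite L" and "\<And>l. l \<in> L \<Longrightarrow> v l \<noteq> 0 \<and> M *v v l = l *s v l"
    and "(\<Sum>l\<in>L. c l *s v l) = 0"
  shows "\<forall>l\<in>L. c l = 0"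
  using assms
proof (induction L arbitrary: c rule: finite_induct)
  case empty
  then show ?case by simp
next
  case (insert m F)
  note hom = matrix_vector_mul_linear_gen[of M, unfolded linear_iff_module_hom]
  let ?S = "\<lambda>d. \<Sum>l\<in>F. d l *s v l"
  have sum0: "c m *s v m + ?S c = 0"
    using insert.prems(2) insert.hyps by simp
  have "(c m * m) *s v m + ?S (\<lambda>l. c l * l) = M *v (c m *s v m + ?S c)"
    using insert.prems(1)
    by (simp add: matrix_vector_right_distrib module_hom.sum[OF hom] module_hom.scale[OF hom]
        vector_smult_assoc mult.commute)
  also have "\<dots> = 0"
    using sum0 by simp
  finally have applied: "(c m * m) *s v m + ?S (\<lambda>l. c l * l) = 0" .
  have scaled: "(c m * m) *s v m + ?S (\<lambda>l. c l * m) = 0"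
    using arg_cong[OF sum0, of "\<lambda>u. m *s u"]
    by (simp add: vector_add_ldistrib vector_smult_assoc sum_cmul[symmetric] mult.commute)
  have "?S (\<lambda>l. c l * l) = ?S (\<lambda>l. c l * m)"
    by (rule add_left_imp_eq[where a = "(c m * m) *s v m"]) (simp only: applied scaled)
  then have "?S (\<lambda>l. c l * (l - m)) = 0"
    by (simp add: right_diff_distrib vector_sub_rdistrib sum_subtractf)
  then have "\<forall>l\<in>F. c l * (l - m) = 0"
    using insert.IH[of "\<lambda>l. c l * (l - m)"] insert.prems(1) by simp
  then have F0: "\<forall>l\<in>F. c l = 0"
    using insert.hyps(2) by auto
  then have "?S c = 0"
    by simp
  then have "c m *s v m = 0"
    using sum0 by simp
  then have "c m = 0"
    using insert.prems(1)[of m] by simp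
  then show ?case
    using F0 by simp
qed

text \<open>Hence a square matrix over a field has only finitely many eigenvalues, so the maximum
  defining the spectral radius is taken over a finite set.\<close>
lemma eigenvalues_finite:
  fixes M :: "'a::field^'k^'k"
  shows "finite {l. \<exists>v. v \<noteq> 0 \<and> M *v v = l *s v}" (is "finite ?E")
proof (rule ccontr)
  assume "infinite ?E"
  then obtain F where F: "finite F" "card F = CARD('k) + 1" "F \<subseteq> ?E"
    using infinite_arbitrarily_large by blast
  define v where "v l = (SOME v. v \<noteq> 0 \<and> M *v v = l *s v)" for l
  have eig: "v l \<noteq> 0 \<and> M *v v l = l *s v l" if "l \<in> F" for l
  proof -
    have "\<exists>v. v \<noteq> 0 \<and> M *v v = l *s v"
      using that F(3) by blast
    then show ?thesis
      unfolding v_def by (rule someI_ex)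
  qed
  have inj: "inj_on v F"
  proof (rule inj_onI)
    fix a b assume "a \<in> F" "b \<in> F" and same: "v a = v b"
    have "a *s v a = M *v v b"
      using eig[OF \<open>a \<in> F\<close>] same by simp
    also have "\<dots> = b *s v a"
      using eig[OF \<open>b \<in> F\<close>] same by simp
    finally have "(a - b) *s v a = 0"
      by (simp add: vector_sub_rdistrib)
    then show "a = b"
      using eig[OF \<open>a \<in> F\<close>] by simp
  qed
  have "vec.independent (v ` F)"
    unfolding vec.independent_explicit
  proof (intro conjI allI impI ballI)
    show "finite (v ` F)"
      using F(1) by simp
    fix c u assume "(\<Sum>u\<in>v ` F. c u *s u) = 0" and "u \<in> v ` F"
    then have "(\<Sum>l\<in>F. c (v l) *s v l) = 0"
      by (simp add: sum.reindex[OF inj])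
    then show "c u = 0"
      using eigenvectors_independent[OF F(1) eig, of "\<lambda>l. c (v l)"] \<open>u \<in> v ` F\<close> by blast
  qed
  then have "card (v ` F) \<le> CARD('k)"
    using vec.independent_card_le_dim[of "v ` F" UNIV] by (simp add: card_cart_basis)
  then show False
    using F(2) card_image[OF inj] by simp
qed

lemma spectral_radius_ge_eigenvalue:
  fixes A :: "real^'k^'k"
  assumes eigen: "A *v v = l *s v" and "v \<noteq> 0"
  shows "\<bar>l\<bar> \<le> spectral_radius A"
proof -
  define vc where "vc = (\<chi> i. complex_of_real (v$i))"
  have "vc \<noteq> 0"
    using \<open>v \<noteq> 0\<close> by (auto simp: vc_def vec_eq_iff)
  moreover have "cmat A *v vc = complex_of_real l *s vc"
    using eigen by (simp add: vec_eq_iff cmat_def vc_def matrix_vector_mult_def flip: of_real_mult of_real_sum)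
  ultimately have member: "\<bar>l\<bar> \<in> cmod ` {l. \<exists>v. v \<noteq> 0 \<and> cmat A *v v = l *s v}"
    by (intro image_eqI[where x = "complex_of_real l"]) auto
  have spectrum: "{cmod l | l. \<exists>v. v \<noteq> 0 \<and> cmat A *v v = l *s v}
      = cmod ` {l. \<exists>v. v \<noteq> 0 \<and> cmat A *v v = l *s v}"
    by auto
  show ?thesis
    unfolding spectral_radius_def spectrum
    by (rule Max_ge[OF finite_imageI[OF eigenvalues_finite] member])
qed

lemma phiinv_phi:
  assumes "strict_mono_on {0<..} \<phi>" and "0 < t"
  shows "phiinv \<phi> (\<phi> t) = t"
  unfolding phiinv_def
  using the_inv_into_f_f[OF strict_mono_on_imp_inj_on[OF assms(1)]] assms(2) by simp

text \<open>By the intermediate value theorem every value between the images of t/2 and 2t is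
  attained, so the inverse is also a right inverse near the image of t.\<close>
lemma phiinv_right_inverse:
  assumes diff: "\<forall>t>0. \<phi> differentiable (at t)" and mono: "strict_mono_on {0<..} \<phi>"
    and t: "0 < t" and u: "\<phi> (t/2) < u" "u < \<phi> (2*t)"
  shows "0 < phiinv \<phi> u \<and> \<phi> (phiinv \<phi> u) = u"
proof -
  have "\<exists>s. t/2 \<le> s \<and> s \<le> 2*t \<and> \<phi> s = u"
    using u t diff by (intro IVT) (auto intro: differentiable_imp_continuous_within)
  then obtain s where s: "t/2 \<le> s" "\<phi> s = u"
    by blast
  then have "0 < s"
    using t by simp
  then show ?thesis
    using s phiinv_phi[OF mono] by auto
qed

lemma phiinv_has_derivative:
  assumes diff: "\<forall>t>0. \<phi> differentiable (at t)" and mono: "strict_mono_on {0<..} \<phi>"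
    and dpos: "\<forall>t>0. deriv \<phi> t > 0" and t: "0 < t"
  shows "(phiinv \<phi> has_real_derivative inverse (deriv \<phi> t)) (at (\<phi> t))"
proof -
  have cont: "isCont \<phi> s" if "0 < s" for s
    using diff that by (simp add: differentiable_imp_continuous_within)
  have below: "\<phi> (t/2) < \<phi> t" and above: "\<phi> t < \<phi> (2*t)"
    using t by (auto intro!: strict_mono_onD[OF mono])
  have "isCont (phiinv \<phi>) (\<phi> t)"
    by (rule isCont_inverse_function2[of "t/2" t "2*t"]) (use t phiinv_phi[OF mono] cont in auto)
  moreover have "DERIV \<phi> t :> deriv \<phi> t"
    using diff t by (simp add: DERIV_deriv_iff_real_differentiable)
  ultimately show ?thesis
    using t dpos below above phiinv_phi[OF mono] phiinv_right_inverse[OF diff mono t]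
    by (intro DERIV_inverse_function[where a = "\<phi> (t/2)" and b = "\<phi> (2*t)"]) auto
qed

text \<open>It turns a utility gain into a gain in log-SIR.\<close>
lemma ln_phiinv_tangent:
  assumes diff: "\<forall>t>0. \<phi> differentiable (at t)" and mono: "strict_mono_on {0<..} \<phi>"
    and log_convex: "convex_on (\<phi> ` {0<..}) (\<lambda>s. ln (phiinv \<phi> s))"
    and dpos: "\<forall>t>0. deriv \<phi> t > 0" and t: "0 < t" and t': "0 < t'"
  shows "deriv (phiinv \<phi>) (\<phi> t) / t * (\<phi> t' - \<phi> t) \<le> ln t' - ln t"
proof -
  have inv_deriv: "(phiinv \<phi> has_real_derivative inverse (deriv \<phi> t)) (at (\<phi> t))"
    using phiinv_has_derivative[OF diff mono dpos t] .
  have ln_deriv: "((\<lambda>s. ln (phiinv \<phi> s)) has_real_derivative inverse t * inverse (deriv \<phi> t)) (at (\<phi> t))"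
    using DERIV_chain2[OF _ inv_deriv, of ln "inverse t"] DERIV_ln[of t] t phiinv_phi[OF mono] by simp
  have "connected (\<phi> ` {0<..})"
    by (rule connected_continuous_image)
       (use diff in \<open>auto intro!: continuous_at_imp_continuous_on simp: differentiable_imp_continuous_within\<close>)
  moreover have "\<phi> t \<in> interior (\<phi> ` {0<..})"
  proof (rule interiorI[of "{\<phi> (t/2)<..<\<phi> (2*t)}"])
    show "{\<phi> (t/2)<..<\<phi> (2*t)} \<subseteq> \<phi> ` {0<..}"
    proof
      fix u assume "u \<in> {\<phi> (t/2)<..<\<phi> (2*t)}"
      then have "0 < phiinv \<phi> u \<and> \<phi> (phiinv \<phi> u) = u"
        using phiinv_right_inverse[OF diff mono t] by auto
      then show "u \<in> \<phi> ` {0<..}"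
        by (metis greaterThan_iff image_eqI)
    qed
  qed (use t in \<open>auto intro!: strict_mono_onD[OF mono]\<close>)
  ultimately have "inverse t * inverse (deriv \<phi> t) * (\<phi> t' - \<phi> t)
      \<le> ln (phiinv \<phi> (\<phi> t')) - ln (phiinv \<phi> (\<phi> t))"
    using ln_deriv t' by (intro convex_on_imp_above_tangent[OF log_convex])
      (auto intro: has_field_derivative_at_within)
  moreover have "deriv (phiinv \<phi>) (\<phi> t) = inverse (deriv \<phi> t)"
    using inv_deriv by (rule DERIV_imp_deriv)
  ultimately show ?thesis
    using t t' phiinv_phi[OF mono] by (simp add: divide_inverse mult.commute)
qed

definition log_gap :: "real \<Rightarrow> real" where
  "log_gap t = t - 1 - ln t"

lemma log_gap_nonneg: "0 < t \<Longrightarrow> 0 \<le> log_gap t"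
  unfolding log_gap_def using ln_le_minus_one[of t] by simp

lemma log_gap_eq_0: "0 < t \<Longrightarrow> log_gap t = 0 \<Longrightarrow> t = 1"
  unfolding log_gap_def using ln_eq_minus_one[of t] by simp

text \<open>Jensen's inequality for the concave logarithm with explicit defect: for a probability
  vector M, ln (sum M r) exceeds sum M ln r by a sum of nonnegative gaps.\<close>
lemma ln_weighted_mean:
  fixes M r :: "'j::finite \<Rightarrow> real"
  assumes M_nonneg: "\<forall>j. 0 \<le> M j" and M_sum: "(\<Sum>j\<in>UNIV. M j) = 1" and r_pos: "\<forall>j. 0 < r j"
  defines "m \<equiv> \<Sum>j\<in>UNIV. M j * r j"
  shows "ln m = (\<Sum>j\<in>UNIV. M j * ln (r j)) + (\<Sum>j\<in>UNIV. M j * log_gap (r j / m))"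
proof -
  obtain j0 where "M j0 \<noteq> 0"
    using M_sum by (metis sum.neutral zero_neq_one)
  then have "0 < M j0 * r j0"
    using M_nonneg r_pos by (simp add: order_le_neq_trans)
  also have "\<dots> \<le> m"
    unfolding m_def using M_nonneg r_pos
    by (intro member_le_sum) (auto simp: less_imp_le)
  finally have m_pos: "0 < m" .
  have "M j * log_gap (r j / m) = M j * r j / m - M j - M j * ln (r j) + M j * ln m" for j
    unfolding log_gap_def using r_pos m_pos by (simp add: ln_divide_pos algebra_simps)
  then have "(\<Sum>j\<in>UNIV. M j * log_gap (r j / m)) = m / m - 1 - (\<Sum>j\<in>UNIV. M j * ln (r j)) + ln m"
    by (simp add: sum.distrib sum_subtractf sum_divide_distrib[symmetric] sum_distrib_right[symmetric]
        M_sum m_def)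
  then show ?thesis
    using m_pos by simp
qed

text \<open>For a row-stochastic M with stationary weights a (a M = a), averaging the Jensen
  identity row by row gives the weighted log-ratio of r and M r in terms of the gaps only.\<close>
lemma stationary_log_identity:
  fixes M :: "'k::finite \<Rightarrow> 'k \<Rightarrow> real" and a r :: "'k \<Rightarrow> real"
  assumes M_nonneg: "\<forall>k j. 0 \<le> M k j" and M_rows: "\<forall>k. (\<Sum>j\<in>UNIV. M k j) = 1"
    and stationary: "\<forall>j. (\<Sum>k\<in>UNIV. a k * M k j) = a j" and r_pos: "\<forall>j. 0 < r j"
  defines "m \<equiv> \<lambda>k. \<Sum>j\<in>UNIV. M k j * r j"
  shows "(\<Sum>k\<in>UNIV. a k * (ln (r k) - ln (m k)))
    = - (\<Sum>k\<in>UNIV. a k * (\<Sum>j\<in>UNIV. M k j * log_gap (r j / m k)))"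
proof -
  have jensen: "ln (m k) = (\<Sum>j\<in>UNIV. M k j * ln (r j)) + (\<Sum>j\<in>UNIV. M k j * log_gap (r j / m k))"
    for k
    unfolding m_def using ln_weighted_mean[of "M k" r] M_nonneg M_rows r_pos by blast
  have "(\<Sum>k\<in>UNIV. a k * (\<Sum>j\<in>UNIV. M k j * ln (r j)))
      = (\<Sum>k\<in>UNIV. \<Sum>j\<in>UNIV. a k * M k j * ln (r j))"
    by (simp add: sum_distrib_left mult.assoc)
  also have "\<dots> = (\<Sum>j\<in>UNIV. \<Sum>k\<in>UNIV. a k * M k j * ln (r j))"
    by (rule sum.swap)
  also have "\<dots> = (\<Sum>j\<in>UNIV. (\<Sum>k\<in>UNIV. a k * M k j) * ln (r j))"
    by (simp add: sum_distrib_right)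
  finally have averaged: "(\<Sum>k\<in>UNIV. a k * (\<Sum>j\<in>UNIV. M k j * ln (r j))) = (\<Sum>k\<in>UNIV. a k * ln (r k))"
    using stationary by simp
  have "(\<Sum>k\<in>UNIV. a k * (ln (r k) - ln (m k)))
      = (\<Sum>k\<in>UNIV. a k * ln (r k)) - (\<Sum>k\<in>UNIV. a k * (\<Sum>j\<in>UNIV. M k j * ln (r j)))
        - (\<Sum>k\<in>UNIV. a k * (\<Sum>j\<in>UNIV. M k j * log_gap (r j / m k)))"
    unfolding jensen by (simp add: right_diff_distrib distrib_left sum_subtractf sum.distrib)
  then show ?thesis
    using averaged by linarith
qed

lemma weighted_sum_squeeze:
  fixes a f g :: "'k::finite \<Rightarrow> real"
  assumes a_pos: "\<forall>k. 0 < a k" and le: "\<forall>k. f k \<le> g k"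
    and lower: "0 \<le> (\<Sum>k\<in>UNIV. a k * f k)" and upper: "(\<Sum>k\<in>UNIV. a k * g k) \<le> b" and "b \<le> 0"
  shows "\<forall>k. f k = g k" and "(\<Sum>k\<in>UNIV. a k * g k) = b" and "b = 0"
proof -
  have mono: "(\<Sum>k\<in>UNIV. a k * f k) \<le> (\<Sum>k\<in>UNIV. a k * g k)"
    using a_pos le by (intro sum_mono mult_left_mono) (auto simp: less_imp_le)
  then show "(\<Sum>k\<in>UNIV. a k * g k) = b" and "b = 0"
    using lower upper \<open>b \<le> 0\<close> by linarith+
  have "(\<Sum>k\<in>UNIV. a k * (g k - f k)) = 0"
    using mono lower upper \<open>b \<le> 0\<close> by (simp add: right_diff_distrib sum_subtractf)
  moreover have "0 \<le> a k * (g k - f k)" for k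
    using a_pos le by (simp add: less_imp_le)
  ultimately have "a k * (g k - f k) = 0" for k
    by (simp add: sum_nonneg_eq_0_iff)
  then show "\<forall>k. f k = g k"
    using a_pos by (metis eq_iff_diff_eq_0 less_irrefl mult_eq_0_iff)
qed

text \<open>A nonnegative matrix with a positive eigenvector for a positive eigenvalue has no zero
  row, so it maps positive vectors to positive vectors.\<close>
lemma perron_image_pos:
  fixes A :: "real^'k^'k" and x p :: "real^'k"
  assumes A_nonneg: "\<forall>i j. 0 \<le> A$i$j" and x_pos: "\<forall>k. 0 < x$k" and l_pos: "0 < l"
    and right: "A *v x = l *s x" and p_pos: "\<forall>k. 0 < p$k"
  shows "0 < (A *v p)$k"
proof -
  have "\<exists>j. 0 < A$k$j * x$j"
  proof (rule ccontr)
    assume "\<not> ?thesis"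
    then have "(A *v x)$k \<le> 0"
      unfolding matrix_vector_mult_def by (simp add: not_less sum_nonpos)
    then have "l * x$k \<le> 0"
      using right by simp
    then show False
      using mult_pos_pos[OF l_pos x_pos[rule_format, of k]] by linarith
  qed
  then obtain j where "0 < A$k$j * x$j"
    by blast
  then have "0 < A$k$j * p$j"
    using zero_less_mult_pos2 x_pos p_pos by (metis mult_pos_pos)
  also have "\<dots> \<le> (\<Sum>i\<in>UNIV. A$k$i * p$i)"
    using A_nonneg p_pos by (intro member_le_sum) (auto intro!: mult_nonneg_nonneg simp: less_imp_le)
  finally show ?thesis
    by (simp add: matrix_vector_mult_def)
qed

text \<open>It follows from the stationary identity with M = diag(l x)^-1 A diag(x),
  which is row-stochastic with stationary weights y o x.\<close>
lemma perron_log_identity: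
  fixes A :: "real^'k^'k" and x y p :: "real^'k"
  assumes A_nonneg: "\<forall>i j. 0 \<le> A$i$j" and x_pos: "\<forall>k. 0 < x$k" and y_pos: "\<forall>k. 0 < y$k"
    and p_pos: "\<forall>k. 0 < p$k" and l_pos: "0 < l"
    and right: "A *v x = l *s x" and left: "y v* A = l *s y"
  shows "(\<Sum>k\<in>UNIV. y$k * x$k * ln (p$k / (A *v p)$k))
    = - ln l * (\<Sum>k\<in>UNIV. y$k * x$k)
      - (\<Sum>k\<in>UNIV. y$k * x$k * (\<Sum>j\<in>UNIV. A$k$j * x$j / (l * x$k)
           * log_gap ((p$j / x$j) / ((A *v p)$k / (l * x$k)))))"
proof -
  define M where "M k j = A$k$j * x$j / (l * x$k)" for k j
  define r where "r j = p$j / x$j" for j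
  define a where "a k = y$k * x$k" for k
  have Ax: "(\<Sum>j\<in>UNIV. A$k$j * x$j) = l * x$k" for k
    using right by (simp add: vec_eq_iff matrix_vector_mult_def)
  have yA: "(\<Sum>k\<in>UNIV. y$k * A$k$j) = l * y$j" for j
    using left by (simp add: vec_eq_iff vector_matrix_mult_def)
  have lx_pos: "0 < l * x$k" for k
    using l_pos x_pos by simp
  have M_nonneg: "\<forall>k j. 0 \<le> M k j"
    using A_nonneg x_pos lx_pos by (simp add: M_def less_imp_le)
  have M_rows: "\<forall>k. (\<Sum>j\<in>UNIV. M k j) = 1"
  proof
    fix k
    have "(\<Sum>j\<in>UNIV. M k j) = (\<Sum>j\<in>UNIV. A$k$j * x$j) / (l * x$k)"
      by (simp add: M_def sum_divide_distrib)
    then show "(\<Sum>j\<in>UNIV. M k j) = 1"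
      using Ax[of k] lx_pos[of k] by (metis div_self less_irrefl)
  qed
  have stationary: "\<forall>j. (\<Sum>k\<in>UNIV. a k * M k j) = a j"
  proof
    fix j
    have "a k * M k j = y$k * A$k$j * x$j / l" for k
      using x_pos[rule_format, of k] l_pos by (simp add: a_def M_def field_simps)
    then show "(\<Sum>k\<in>UNIV. a k * M k j) = a j"
      using yA l_pos by (simp add: a_def sum_divide_distrib[symmetric] sum_distrib_right[symmetric])
  qed
  have r_pos: "\<forall>j. 0 < r j"
    using p_pos x_pos by (simp add: r_def)
  have means: "(\<Sum>j\<in>UNIV. M k j * r j) = (A *v p)$k / (l * x$k)" for k
    using x_pos by (simp add: M_def r_def matrix_vector_mult_def sum_divide_distrib less_imp_neq[symmetric])
  have Ap_pos: "0 < (A *v p)$k" for k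
    using perron_image_pos[OF A_nonneg x_pos l_pos right p_pos] .
  have termwise: "ln (p$k / (A *v p)$k) = ln (r k) - ln ((A *v p)$k / (l * x$k)) - ln l" for k
    using p_pos[rule_format, of k] x_pos[rule_format, of k] Ap_pos[of k] l_pos
    by (simp add: r_def ln_divide_pos ln_mult)
  have "(\<Sum>k\<in>UNIV. a k * ln (p$k / (A *v p)$k))
      = (\<Sum>k\<in>UNIV. a k * (ln (r k) - ln (\<Sum>j\<in>UNIV. M k j * r j))) - ln l * (\<Sum>k\<in>UNIV. a k)"
    unfolding termwise means by (simp add: algebra_simps sum_subtractf sum_distrib_left sum.distrib)
  also have "\<dots> = - ln l * (\<Sum>k\<in>UNIV. a k)
      - (\<Sum>k\<in>UNIV. a k * (\<Sum>j\<in>UNIV. M k j * log_gap (r j / (\<Sum>j\<in>UNIV. M k j * r j))))"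
    using stationary_log_identity[OF M_nonneg M_rows stationary r_pos] by simp
  finally show ?thesis
    unfolding means by (simp add: a_def M_def r_def)
qed

lemma perron_gap_nonneg:
  fixes A :: "real^'k^'k" and x p :: "real^'k"
  assumes A_nonneg: "\<forall>i j. 0 \<le> A$i$j" and x_pos: "\<forall>k. 0 < x$k" and l_pos: "0 < l"
    and right: "A *v x = l *s x" and p_pos: "\<forall>k. 0 < p$k"
  shows "0 \<le> A$k$j * x$j / (l * x$k) * log_gap ((p$j / x$j) / ((A *v p)$k / (l * x$k)))"
proof -
  have "0 < (p$j / x$j) / ((A *v p)$k / (l * x$k))"
    using x_pos p_pos l_pos perron_image_pos[OF A_nonneg x_pos l_pos right p_pos, of k] by simp
  moreover have "0 \<le> A$k$j * x$j / (l * x$k)"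
    using A_nonneg x_pos l_pos by (simp add: less_imp_le)
  ultimately show ?thesis
    by (intro mult_nonneg_nonneg log_gap_nonneg)
qed

lemma perron_log_bound:
  fixes A :: "real^'k^'k" and x y p :: "real^'k"
  assumes A_nonneg: "\<forall>i j. 0 \<le> A$i$j" and x_pos: "\<forall>k. 0 < x$k" and y_pos: "\<forall>k. 0 < y$k"
    and p_pos: "\<forall>k. 0 < p$k" and l_pos: "0 < l"
    and right: "A *v x = l *s x" and left: "y v* A = l *s y"
  shows "(\<Sum>k\<in>UNIV. y$k * x$k * ln (p$k / (A *v p)$k)) \<le> - ln l * (\<Sum>k\<in>UNIV. y$k * x$k)"
proof -
  have inner: "0 \<le> (\<Sum>j\<in>UNIV. A$k$j * x$j / (l * x$k) * log_gap ((p$j / x$j) / ((A *v p)$k / (l * x$k))))"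
    for k
    using perron_gap_nonneg[OF A_nonneg x_pos l_pos right p_pos] by (rule sum_nonneg)
  then have "0 \<le> (\<Sum>k\<in>UNIV. y$k * x$k * (\<Sum>j\<in>UNIV. A$k$j * x$j / (l * x$k)
      * log_gap ((p$j / x$j) / ((A *v p)$k / (l * x$k)))))"
    using x_pos y_pos by (intro sum_nonneg mult_nonneg_nonneg[OF _ inner]) (auto simp: less_imp_le)
  then show ?thesis
    using perron_log_identity[OF assms] by linarith
qed

text \<open>Equality case: all gaps vanish, so p/x is constant along positive entries of A.  If A
  has a strictly positive column and no zero column this makes p/x constant, i.e. p is an
  eigenvector of A for l.\<close>
lemma perron_log_equality:
  fixes A :: "real^'k^'k" and x y p :: "real^'k"
  assumes A_nonneg: "\<forall>i j. 0 \<le> A$i$j" and x_pos: "\<forall>k. 0 < x$k" and y_pos: "\<forall>k. 0 < y$k"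
    and p_pos: "\<forall>k. 0 < p$k" and l_pos: "0 < l"
    and right: "A *v x = l *s x" and left: "y v* A = l *s y"
    and equal: "(\<Sum>k\<in>UNIV. y$k * x$k * ln (p$k / (A *v p)$k)) = - ln l * (\<Sum>k\<in>UNIV. y$k * x$k)"
    and positive_column: "\<forall>k. 0 < A$k$j0" and no_zero_column: "\<forall>j. \<exists>k. 0 < A$k$j"
  shows "A *v p = l *s p"
proof -
  define m where "m k = (A *v p)$k / (l * x$k)" for k
  define gap where "gap k j = A$k$j * x$j / (l * x$k) * log_gap ((p$j / x$j) / m k)" for k j
  have gap_nonneg: "0 \<le> gap k j" for k j
    unfolding gap_def m_def using perron_gap_nonneg[OF A_nonneg x_pos l_pos right p_pos] .
  have row_nonneg: "0 \<le> y$k * x$k * (\<Sum>j\<in>UNIV. gap k j)" for k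
    using x_pos y_pos gap_nonneg by (intro mult_nonneg_nonneg sum_nonneg) (auto simp: less_imp_le)
  have "(\<Sum>k\<in>UNIV. y$k * x$k * (\<Sum>j\<in>UNIV. gap k j)) = 0"
    using perron_log_identity[OF A_nonneg x_pos y_pos p_pos l_pos right left] equal
    unfolding gap_def m_def by linarith
  then have "y$k * x$k * (\<Sum>j\<in>UNIV. gap k j) = 0" for k
    using row_nonneg by (simp add: sum_nonneg_eq_0_iff)
  then have "(\<Sum>j\<in>UNIV. gap k j) = 0" for k
    using x_pos y_pos by (metis mult_eq_0_iff less_irrefl)
  then have gap_zero: "gap k j = 0" for k j
    using gap_nonneg by (simp add: sum_nonneg_eq_0_iff)
  have balanced: "p$j / x$j = m k" if "0 < A$k$j" for k j
  proof -
    have m_pos: "0 < m k"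
      unfolding m_def using perron_image_pos[OF A_nonneg x_pos l_pos right p_pos] x_pos l_pos by simp
    have "0 < A$k$j * x$j / (l * x$k)"
      using that x_pos l_pos by simp
    then have "log_gap ((p$j / x$j) / m k) = 0"
      using gap_zero[of k j] unfolding gap_def by (metis mult_eq_0_iff less_irrefl)
    then have "(p$j / x$j) / m k = 1"
      using m_pos x_pos p_pos by (intro log_gap_eq_0) simp_all
    then show ?thesis
      by (metis divide_eq_1_iff)
  qed
  have ratio: "p$k / x$k = m k" for k
  proof -
    obtain k' where "0 < A$k'$k"
      using no_zero_column by blast
    then have "p$k / x$k = p$j0 / x$j0"
      using balanced positive_column by metis
    also have "\<dots> = m k"
      using balanced positive_column by blast
    finally show ?thesis .
  qed
  have "(A *v p)$k = l * p$k" for k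
    using ratio[of k] x_pos[rule_format, of k] l_pos by (simp add: m_def field_simps)
  then show ?thesis
    by (simp add: vec_eq_iff)
qed

lemma GB_entry:
  "(Gmat \<phi> q ** Bmat C phat V z \<gamma> n)$k$j
    = \<gamma>$k * phiinv \<phi> (q$k) * (V$k$j + z$k * C$n$j / phat$n)"
proof -
  have "(Gmat \<phi> q ** Bmat C phat V z \<gamma> n)$k$j = phiinv \<phi> (q$k) * (Bmat C phat V z \<gamma> n)$k$j"
    by (simp add: matrix_matrix_mult_def Gmat_def if_distrib[where f = "\<lambda>g. g * _"] sum.delta cong: if_cong)
  then show ?thesis
    by (simp add: Bmat_def algebra_simps)
qed

lemma GB_mult:
  "((Gmat \<phi> q ** Bmat C phat V z \<gamma> n) *v v)$k
    = \<gamma>$k * phiinv \<phi> (q$k) * ((V *v v)$k + z$k * (C *v v)$n / phat$n)"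
  by (simp add: matrix_vector_mult_def GB_entry algebra_simps sum.distrib sum_distrib_left
      sum_divide_distrib)

lemma SIR_denominator_pos:
  fixes V :: "real^'k^'k" and z p :: "real^'k"
  assumes V_nonneg: "\<forall>i j. 0 \<le> V$i$j" and z_pos: "\<forall>k. 0 < z$k" and p_pos: "\<forall>k. 0 < p$k"
  shows "0 < (V *v p)$k + z$k"
proof -
  have "0 \<le> (\<Sum>j\<in>UNIV. V$k$j * p$j)"
    using V_nonneg p_pos by (auto intro!: sum_nonneg mult_nonneg_nonneg simp: less_imp_le)
  then have "0 \<le> (V *v p)$k"
    by (simp add: matrix_vector_mult_def)
  then show ?thesis
    using z_pos by (simp add: add_nonneg_pos)
qed

lemma SIR_pos:
  fixes V :: "real^'k^'k" and z p :: "real^'k"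
  assumes "\<forall>i j. 0 \<le> V$i$j" and "\<forall>k. 0 < z$k" and p_pos: "\<forall>k. 0 < p$k"
  shows "0 < SIR V z k p"
  unfolding SIR_def using SIR_denominator_pos[OF assms] p_pos by simp

lemma phiinv_of_QoS:
  assumes mono: "strict_mono_on {0<..} \<phi>" and \<gamma>_pos: "0 < \<gamma>$k"
    and V_nonneg: "\<forall>i j. 0 \<le> V$i$j" and z_pos: "\<forall>k. 0 < z$k" and p_pos: "\<forall>k. 0 < p$k"
    and q: "q$k = \<phi> (SIR V z k p / \<gamma>$k)"
  shows "\<gamma>$k * phiinv \<phi> (q$k) = SIR V z k p"
  using q phiinv_phi[OF mono] SIR_pos[OF V_nonneg z_pos p_pos, of k] \<gamma>_pos by simp

lemma GB_nonneg:
  assumes "\<forall>i j. 0 \<le> V$i$j" and "\<forall>k. 0 < z$k" and "\<forall>n. 0 < phat$n" and "\<forall>n j. 0 \<le> C$n$j"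
    and "\<forall>k. 0 < \<gamma>$k * phiinv \<phi> (q$k)"
  shows "0 \<le> (Gmat \<phi> q ** Bmat C phat V z \<gamma> n)$k$j"
  unfolding GB_entry using assms by (simp add: less_imp_le)

lemma GB_pos:
  assumes "\<forall>i j. 0 \<le> V$i$j" and "\<forall>k. 0 < z$k" and "\<forall>n. 0 < phat$n" and "\<forall>n j. 0 \<le> C$n$j"
    and "\<forall>k. 0 < \<gamma>$k * phiinv \<phi> (q$k)" and "0 < V$k$j \<or> 0 < C$n$j"
  shows "0 < (Gmat \<phi> q ** Bmat C phat V z \<gamma> n)$k$j"
proof -
  have "0 \<le> z$k * C$n$j / phat$n"
    using assms by (simp add: less_imp_le)
  moreover have "0 < V$k$j \<or> 0 < z$k * C$n$j / phat$n"
    using assms by auto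
  ultimately have "0 < V$k$j + z$k * C$n$j / phat$n"
    using assms(1) by (meson add_nonneg_pos add_pos_nonneg)
  then show ?thesis
    unfolding GB_entry using assms(5) by simp
qed

lemma irreducible_column:
  assumes "irreducible_mat V"
  shows "\<exists>i. 0 < V$i$j"
proof -
  have "(j, j) \<in> {(a, b). 0 < V$a$b}\<^sup>+"
    using assms unfolding irreducible_mat_def by blast
  then show ?thesis
    by (induction rule: trancl.induct) auto
qed

lemma GB_fixed_point:
  fixes V :: "real^'k^'k" and z p :: "real^'k"
  assumes V_nonneg: "\<forall>i j. 0 \<le> V$i$j" and z_pos: "\<forall>k. 0 < z$k" and p_pos: "\<forall>k. 0 < p$k"
    and weights: "\<forall>k. \<gamma>$k * phiinv \<phi> (q$k) = SIR V z k p"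
    and active: "(C *v p)$n = phat$n" and "0 < phat$n"
  shows "(Gmat \<phi> q ** Bmat C phat V z \<gamma> n) *v p = p"
proof -
  have "((Gmat \<phi> q ** Bmat C phat V z \<gamma> n) *v p)$k = p$k" for k
    using weights active \<open>0 < phat$n\<close> SIR_denominator_pos[OF V_nonneg z_pos p_pos, of k]
    by (simp add: GB_mult SIR_def)
  then show ?thesis
    by (simp add: vec_eq_iff)
qed

lemma boundary_radius_ge_one:
  fixes V :: "real^'k^'k" and z p :: "real^'k"
  assumes V_nonneg: "\<forall>i j. 0 \<le> V$i$j" and z_pos: "\<forall>k. 0 < z$k" and p_pos: "\<forall>k. 0 < p$k"
    and weights: "\<forall>k. \<gamma>$k * phiinv \<phi> (q$k) = SIR V z k p"
    and active: "(C *v p)$n = phat$n" and "0 < phat$n"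
  shows "1 \<le> spectral_radius (Gmat \<phi> q ** Bmat C phat V z \<gamma> n)"
proof -
  have "p \<noteq> 0"
    using p_pos by (metis less_irrefl zero_index)
  then show ?thesis
    using spectral_radius_ge_eigenvalue[of _ p 1] GB_fixed_point[OF assms] by simp
qed

lemma ln_SIR_le_GB:
  fixes V :: "real^'k^'k" and z p :: "real^'k"
  assumes V_nonneg: "\<forall>i j. 0 \<le> V$i$j" and z_pos: "\<forall>k. 0 < z$k" and "0 < phat$n"
    and p_pos: "\<forall>k. 0 < p$k" and budget: "(C *v p)$n \<le> phat$n"
    and weight: "\<gamma>$k * phiinv \<phi> (q$k) = s" and "0 < s"
    and image_pos: "0 < ((Gmat \<phi> q ** Bmat C phat V z \<gamma> n) *v p)$k"
  shows "ln (SIR V z k p) - ln s \<le> ln (p$k / ((Gmat \<phi> q ** Bmat C phat V z \<gamma> n) *v p)$k)"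
    and "ln (SIR V z k p) - ln s = ln (p$k / ((Gmat \<phi> q ** Bmat C phat V z \<gamma> n) *v p)$k)
      \<longleftrightarrow> (C *v p)$n = phat$n"
proof -
  define E where "E = (V *v p)$k + z$k"
  define d where "d = (V *v p)$k + z$k * (C *v p)$n / phat$n"
  have E_pos: "0 < E"
    unfolding E_def using SIR_denominator_pos[OF V_nonneg z_pos p_pos] .
  have image: "((Gmat \<phi> q ** Bmat C phat V z \<gamma> n) *v p)$k = s * d"
    unfolding d_def GB_mult weight ..
  then have d_pos: "0 < d"
    using image_pos \<open>0 < s\<close> by (simp add: zero_less_mult_iff)
  have d_le_E: "d \<le> E"
    unfolding d_def E_def using budget z_pos \<open>0 < phat$n\<close>
    by (simp add: divide_le_eq less_imp_le mult_left_mono)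
  have d_eq_E: "d = E \<longleftrightarrow> (C *v p)$n = phat$n"
    unfolding d_def E_def using z_pos[rule_format, of k] \<open>0 < phat$n\<close> by (auto simp: field_simps)
  have split: "ln (SIR V z k p) - ln s = ln (p$k / (s * d)) + (ln d - ln E)"
    using p_pos[rule_format, of k] E_pos d_pos \<open>0 < s\<close>
    by (simp add: SIR_def E_def[symmetric] ln_divide_pos ln_mult)
  show "ln (SIR V z k p) - ln s \<le> ln (p$k / ((Gmat \<phi> q ** Bmat C phat V z \<gamma> n) *v p)$k)"
    unfolding split image using d_le_E d_pos by simp
  show "ln (SIR V z k p) - ln s = ln (p$k / ((Gmat \<phi> q ** Bmat C phat V z \<gamma> n) *v p)$k)
      \<longleftrightarrow> (C *v p)$n = phat$n"
    unfolding split image d_eq_E[symmetric] using d_pos E_pos by simp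
qed

lemma maximizer_log_gain:
  fixes V :: "real^'k^'k" and z \<gamma> p pstar q w :: "real^'k" and a :: "'k \<Rightarrow> real"
  assumes diff: "\<forall>t>0. \<phi> differentiable (at t)" and mono: "strict_mono_on {0<..} \<phi>"
    and log_convex: "convex_on (\<phi> ` {0<..}) (\<lambda>s. ln (phiinv \<phi> s))"
    and dpos: "\<forall>t>0. deriv \<phi> t > 0" and \<gamma>_pos: "\<forall>k. 0 < \<gamma>$k"
    and V_nonneg: "\<forall>i j. 0 \<le> V$i$j" and z_pos: "\<forall>k. 0 < z$k"
    and p_pos: "\<forall>k. 0 < p$k" and pstar_pos: "\<forall>k. 0 < pstar$k"
    and q: "\<forall>k. q$k = \<phi> (SIR V z k p / \<gamma>$k)"
    and better: "aggF \<phi> V z \<gamma> p w \<le> aggF \<phi> V z \<gamma> pstar w"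
    and w: "\<forall>k. w$k = c * (deriv (phiinv \<phi>) (q$k) / phiinv \<phi> (q$k)) * a k"
    and c_pos: "0 < c" and a_pos: "\<forall>k. 0 < a k"
  shows "0 \<le> (\<Sum>k\<in>UNIV. a k * (ln (SIR V z k pstar) - ln (SIR V z k p)))"
proof -
  define t where "t k = SIR V z k p / \<gamma>$k" for k
  define t' where "t' k = SIR V z k pstar / \<gamma>$k" for k
  have t_pos: "0 < t k" and t'_pos: "0 < t' k" for k
    unfolding t_def t'_def using SIR_pos[OF V_nonneg z_pos p_pos] SIR_pos[OF V_nonneg z_pos pstar_pos]
      \<gamma>_pos by simp_all
  have log_ratio: "ln (t' k) - ln (t k) = ln (SIR V z k pstar) - ln (SIR V z k p)" for k
    unfolding t_def t'_def using SIR_pos[OF V_nonneg z_pos p_pos] SIR_pos[OF V_nonneg z_pos pstar_pos]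
      \<gamma>_pos by (simp add: ln_divide_pos)
  have termwise: "w$k * (\<phi> (t' k) - q$k) \<le> c * (a k * (ln (SIR V z k pstar) - ln (SIR V z k p)))" for k
  proof -
    have qk: "q$k = \<phi> (t k)"
      using q by (simp add: t_def)
    have "deriv (phiinv \<phi>) (q$k) / phiinv \<phi> (q$k) * (\<phi> (t' k) - q$k)
        \<le> ln (SIR V z k pstar) - ln (SIR V z k p)"
      unfolding qk phiinv_phi[OF mono t_pos] log_ratio[symmetric]
      by (rule ln_phiinv_tangent[OF diff mono log_convex dpos t_pos t'_pos])
    then have "c * a k * (deriv (phiinv \<phi>) (q$k) / phiinv \<phi> (q$k) * (\<phi> (t' k) - q$k))
        \<le> c * a k * (ln (SIR V z k pstar) - ln (SIR V z k p))"
      using c_pos a_pos by (intro mult_left_mono) (auto simp: less_imp_le)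
    then show ?thesis
      using w by (simp add: algebra_simps)
  qed
  have "0 \<le> (\<Sum>k\<in>UNIV. w$k * (\<phi> (t' k) - q$k))"
    using better q unfolding aggF_def t_def t'_def by (simp add: right_diff_distrib sum_subtractf)
  also have "\<dots> \<le> (\<Sum>k\<in>UNIV. c * (a k * (ln (SIR V z k pstar) - ln (SIR V z k p))))"
    using termwise by (rule sum_mono)
  also have "\<dots> = c * (\<Sum>k\<in>UNIV. a k * (ln (SIR V z k pstar) - ln (SIR V z k p)))"
    by (simp add: sum_distrib_left)
  finally show ?thesis
    using c_pos by (simp add: zero_le_mult_iff)
qed

text \<open>Conversely, against the Perron weights y o x of G(q) B(n) with spectral radius at least 1,
  no admissible power vector has positive log-SIR gain, and zero gain forces equal SIRs:
  chain ln_SIR_le_GB with the Friedland-Karlin bound; in the equality case the radius is 1,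
  constraint n is active (giving a positive column), irreducibility excludes zero columns,
  and pstar is a fixed point of G(q) B(n).\<close>
lemma SIR_log_gain_nonpos:
  fixes C :: "real^'k^'n" and phat :: "real^'n" and V :: "real^'k^'k"
    and z \<gamma> q x y pstar :: "real^'k" and s :: "'k \<Rightarrow> real"
  assumes V_nonneg: "\<forall>i j. 0 \<le> V$i$j" and z_pos: "\<forall>k. 0 < z$k" and phat_pos: "\<forall>n. 0 < phat$n"
    and C_nonneg: "\<forall>n j. 0 \<le> C$n$j" and V_irred: "irreducible_mat V"
    and weights: "\<forall>k. \<gamma>$k * phiinv \<phi> (q$k) = s k" and s_pos: "\<forall>k. 0 < s k"
    and x_pos: "\<forall>k. 0 < x$k" and y_pos: "\<forall>k. 0 < y$k" and lam_ge: "1 \<le> lam"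
    and right: "(Gmat \<phi> q ** Bmat C phat V z \<gamma> n) *v x = lam *s x"
    and left: "y v* (Gmat \<phi> q ** Bmat C phat V z \<gamma> n) = lam *s y"
    and pstar_pos: "\<forall>k. 0 < pstar$k" and budget: "(C *v pstar)$n \<le> phat$n"
  shows "(\<Sum>k\<in>UNIV. y$k * x$k * (ln (SIR V z k pstar) - ln (s k))) \<le> 0"
    and "(\<Sum>k\<in>UNIV. y$k * x$k * (ln (SIR V z k pstar) - ln (s k))) = 0
      \<Longrightarrow> \<forall>k. SIR V z k pstar = s k"
proof -
  define A where "A = Gmat \<phi> q ** Bmat C phat V z \<gamma> n"
  define a where "a k = y$k * x$k" for k
  have weights_pos: "\<forall>k. 0 < \<gamma>$k * phiinv \<phi> (q$k)"
    using weights s_pos by simp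
  note entries = V_nonneg z_pos phat_pos C_nonneg weights_pos
  have A_nonneg: "\<forall>i j. 0 \<le> A$i$j"
    unfolding A_def using GB_nonneg[OF entries] by blast
  have lam_pos: "0 < lam"
    using lam_ge by simp
  have a_pos: "\<forall>k. 0 < a k"
    using x_pos y_pos by (simp add: a_def)
  have image_pos: "0 < (A *v pstar)$k" for k
    using perron_image_pos[OF A_nonneg x_pos lam_pos right[folded A_def] pstar_pos] .
  note ratio = ln_SIR_le_GB[OF V_nonneg z_pos phat_pos[rule_format] pstar_pos budget
      weights[rule_format] s_pos[rule_format] image_pos[unfolded A_def]]
  have le: "\<forall>k. ln (SIR V z k pstar) - ln (s k) \<le> ln (pstar$k / (A *v pstar)$k)"
    using ratio(1) unfolding A_def by blast
  have bound: "(\<Sum>k\<in>UNIV. a k * ln (pstar$k / (A *v pstar)$k)) \<le> - ln lam * (\<Sum>k\<in>UNIV. a k)"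
    using perron_log_bound[OF A_nonneg x_pos y_pos pstar_pos lam_pos right[folded A_def]
        left[folded A_def]] by (simp add: a_def)
  have nonpos: "- ln lam * (\<Sum>k\<in>UNIV. a k) \<le> 0"
    using lam_ge a_pos by (simp add: sum_nonneg less_imp_le)
  have "(\<Sum>k\<in>UNIV. a k * (ln (SIR V z k pstar) - ln (s k))) \<le> (\<Sum>k\<in>UNIV. a k * ln (pstar$k / (A *v pstar)$k))"
    using a_pos le by (intro sum_mono mult_left_mono) (auto simp: less_imp_le)
  then show "(\<Sum>k\<in>UNIV. y$k * x$k * (ln (SIR V z k pstar) - ln (s k))) \<le> 0"
    using bound nonpos by (simp add: a_def)
  assume "(\<Sum>k\<in>UNIV. y$k * x$k * (ln (SIR V z k pstar) - ln (s k))) = 0"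
  then have "0 \<le> (\<Sum>k\<in>UNIV. a k * (ln (SIR V z k pstar) - ln (s k)))"
    by (simp add: a_def)
  note squeeze = weighted_sum_squeeze[OF a_pos le this bound nonpos]
  have "0 < (\<Sum>k\<in>UNIV. a k)"
    using a_pos by (simp add: sum_pos)
  then have "lam = 1"
    using squeeze(3) lam_pos by simp
  have "(C *v pstar)$n = phat$n"
    using ratio(2) squeeze(1) unfolding A_def by blast
  then obtain j0 where "C$n$j0 \<noteq> 0"
    using phat_pos unfolding matrix_vector_mult_def
    by (metis (no_types, lifting) less_irrefl mult_zero_left sum.neutral vec_lambda_beta)
  then have positive_column: "\<forall>k. 0 < A$k$j0"
    unfolding A_def using GB_pos[OF entries] C_nonneg by (simp add: order_le_neq_trans)
  have no_zero_column: "\<forall>j. \<exists>k. 0 < A$k$j"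
    unfolding A_def using GB_pos[OF entries] irreducible_column[OF V_irred] by blast
  have "A *v pstar = pstar"
    using perron_log_equality[OF A_nonneg x_pos y_pos pstar_pos lam_pos right[folded A_def]
        left[folded A_def] _ positive_column no_zero_column] squeeze(2) \<open>lam = 1\<close>
    by (simp add: a_def)
  then have "ln (SIR V z k pstar) - ln (s k) = 0" for k
    using squeeze(1) pstar_pos by simp
  then show "\<forall>k. SIR V z k pstar = s k"
    using SIR_pos[OF V_nonneg z_pos pstar_pos] s_pos by simp
qed

theorem theorem3:
  fixes C :: "real^'k^'n" and phat :: "real^'n" and V :: "real^'k^'k"
    and z \<gamma> q y x :: "real^'k" and \<phi> :: "real \<Rightarrow> real" and n0 :: 'n and c :: real
  assumes K2: "CARD('k) \<ge> 2"
    and C01: "\<forall>n k. C$n$k = 0 \<or> C$n$k = 1"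
    and Ccol: "\<forall>k. \<exists>n. C$n$k = 1"
    and phat_pos: "\<forall>n. phat$n > 0"
    and V_nonneg: "\<forall>i j. V$i$j \<ge> 0"
    and V_diag: "\<forall>i. V$i$i = 0"
    and z_pos: "\<forall>k. z$k > 0"
    and \<gamma>_pos: "\<forall>k. \<gamma>$k > 0"
    and A2_diff: "\<forall>t>0. \<phi> differentiable (at t)"
    and A2_cont: "continuous_on {0<..} (deriv \<phi>)"
    and A2_mono: "strict_mono_on {0<..} \<phi>"
    and A3: "convex_on (\<phi> ` {0<..}) (\<lambda>s. ln (phiinv \<phi> s))"
    and deriv_pos: "\<forall>t>0. deriv \<phi> t > 0"
    and V_irred: "irreducible_mat V"
    and q_bd: "q \<in> boundaryF \<phi> C phat V z \<gamma>"
    and n0_max: "\<forall>n. spectral_radius (Gmat \<phi> q ** Bmat C phat V z \<gamma> n)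
                    \<le> spectral_radius (Gmat \<phi> q ** Bmat C phat V z \<gamma> n0)"
    and y_pos: "\<forall>k. y$k > 0" and x_pos: "\<forall>k. x$k > 0"
    and y_left: "y v* (Gmat \<phi> q ** Bmat C phat V z \<gamma> n0)
                 = spectral_radius (Gmat \<phi> q ** Bmat C phat V z \<gamma> n0) *s y"
    and x_right: "(Gmat \<phi> q ** Bmat C phat V z \<gamma> n0) *v x
                 = spectral_radius (Gmat \<phi> q ** Bmat C phat V z \<gamma> n0) *s x"
    and c_pos: "c > 0"
    and w_def: "w = (\<chi> k. c * (deriv (phiinv \<phi>) (q$k) / phiinv \<phi> (q$k)) * y$k * x$k)"
  shows "\<forall>pstar \<in> Pplus C phat.
           (\<forall>p \<in> Pplus C phat. aggF \<phi> V z \<gamma> p w \<le> aggF \<phi> V z \<gamma> pstar w) \<longrightarrow>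
           (\<forall>k. \<phi> (SIR V z k pstar / \<gamma>$k) = q$k)"
proof (intro ballI impI)
  fix pstar assume pstar: "pstar \<in> Pplus C phat"
    and optimal: "\<forall>p \<in> Pplus C phat. aggF \<phi> V z \<gamma> p w \<le> aggF \<phi> V z \<gamma> pstar w"
  obtain p n1 where p: "p \<in> Pplus C phat" and q_of_p: "\<forall>k. q$k = \<phi> (SIR V z k p / \<gamma>$k)"
    and active: "(C *v p)$n1 = phat$n1"
    using q_bd unfolding boundaryF_def by blast
  have p_pos: "\<forall>k. 0 < p$k" and pstar_pos: "\<forall>k. 0 < pstar$k"
    and budget: "\<forall>n. (C *v pstar)$n \<le> phat$n"
    using p pstar by (auto simp: Pplus_def)
  have weights: "\<forall>k. \<gamma>$k * phiinv \<phi> (q$k) = SIR V z k p"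
    using phiinv_of_QoS[OF A2_mono _ V_nonneg z_pos p_pos] \<gamma>_pos q_of_p by blast
  have C_nonneg: "\<forall>n j. 0 \<le> C$n$j"
    using C01 by (metis order_refl zero_le_one)
  have radius: "1 \<le> spectral_radius (Gmat \<phi> q ** Bmat C phat V z \<gamma> n0)"
    using boundary_radius_ge_one[OF V_nonneg z_pos p_pos weights active] phat_pos n0_max
    by (meson order_trans)
  have SIR_p_pos: "\<forall>k. 0 < SIR V z k p"
    using SIR_pos[OF V_nonneg z_pos p_pos] by blast
  note log_gain = SIR_log_gain_nonpos[OF V_nonneg z_pos phat_pos C_nonneg V_irred weights SIR_p_pos
      x_pos y_pos radius x_right y_left pstar_pos budget[rule_format]]
  have w_form: "\<forall>k. w$k = c * (deriv (phiinv \<phi>) (q$k) / phiinv \<phi> (q$k)) * (y$k * x$k)"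
    by (simp add: w_def mult.assoc)
  have "0 \<le> (\<Sum>k\<in>UNIV. y$k * x$k * (ln (SIR V z k pstar) - ln (SIR V z k p)))"
    using maximizer_log_gain[OF A2_diff A2_mono A3 deriv_pos \<gamma>_pos V_nonneg z_pos p_pos pstar_pos
        q_of_p optimal[rule_format, OF p] w_form c_pos] x_pos y_pos by simp
  then have "\<forall>k. SIR V z k pstar = SIR V z k p"
    using log_gain(1) by (intro log_gain(2)) linarith
  then show "\<forall>k. \<phi> (SIR V z k pstar / \<gamma>$k) = q$k"
    using q_of_p by simp
qed

end
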